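(* Let $n,m,k$ be positive integers with $n\le m$ and $k<m\le kn$. Then $$\sup_I \frac{\text{OPT-ESW}(I)}{\max_{\mathcal{A}\in \mathcal{C}_k(I)}\text{ESW}(\mathcal{A})}=\max\left\{\frac{m-n+1}{k},1\right\},$$ where the supremum ranges over all single-category instances $I$ with $n$ agents, $m$ goods and cardinality constraint $k$.
   Context: A single-category instance has $n$ agents and a set $M$ of $m$ indivisible goods; each agent $i$ has an additive utility function $u_i:2^M\to\mathbb{R}_{\ge 0}$ with $u_i(\emptyset)=0$ and $u_i(M)=1$. An allocation is a partition $(A_1,\dots,A_n)$ of $M$; it is cardinal if $|A_i|\le k$ for all $i$, and $\mathcal{C}_k(I)$ denotes the set of cardinal allocations. $\text{ESW}(\mathcal{A})=\min_i u_i(A_i)$ and $\text{OPT-ESW}(I)$ is its maximum over all allocations. If $\text{OPT-ESW}(I)=0$ the ratio is defined to be $1$. *)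

theory Defs
  imports Complex_Main "HOL-Library.FuncSet" "HOL-Library.Extended_Real"
begin

(* An instance is given by the additive
   valuations v i g (value of good g for agent i). *)

definition valid_instance :: "nat \<Rightarrow> nat \<Rightarrow> (nat \<Rightarrow> nat \<Rightarrow> real) \<Rightarrow> bool" where
  "valid_instance n m v \<longleftrightarrow>
     (\<forall>i<n. \<forall>g<m. 0 \<le> v i g) \<and> (\<forall>i<n. (\<Sum>g<m. v i g) = 1)"

definition allocations :: "nat \<Rightarrow> nat \<Rightarrow> (nat \<Rightarrow> nat) set" where
  "allocations n m = PiE {..<m} (\<lambda>_. {..<n})"

definition good_bundle :: "nat \<Rightarrow> (nat \<Rightarrow> nat) \<Rightarrow> nat \<Rightarrow> nat set" where
  "good_bundle m f i = {g \<in> {..<m}. f g = i}"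

definition cardinal_allocations :: "nat \<Rightarrow> nat \<Rightarrow> nat \<Rightarrow> (nat \<Rightarrow> nat) set" where
  "cardinal_allocations n m k = {f \<in> allocations n m. \<forall>i<n. card (good_bundle m f i) \<le> k}"

definition ESW :: "nat \<Rightarrow> nat \<Rightarrow> (nat \<Rightarrow> nat \<Rightarrow> real) \<Rightarrow> (nat \<Rightarrow> nat) \<Rightarrow> real" where
  "ESW n m v f = Min ((\<lambda>i. \<Sum>g\<in>good_bundle m f i. v i g) ` {..<n})"

definition OPT_ESW :: "nat \<Rightarrow> nat \<Rightarrow> (nat \<Rightarrow> nat \<Rightarrow> real) \<Rightarrow> real" where
  "OPT_ESW n m v = Max (ESW n m v ` allocations n m)"

definition card_ESW :: "nat \<Rightarrow> nat \<Rightarrow> nat \<Rightarrow> (nat \<Rightarrow> nat \<Rightarrow> real) \<Rightarrow> real" where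
  "card_ESW n m k v = Max (ESW n m v ` cardinal_allocations n m k)"

(* ratio in the extended reals: OPT/0 with OPT > 0 is +infinity; ratio 1 if OPT = 0 *)
definition esw_ratio :: "nat \<Rightarrow> nat \<Rightarrow> nat \<Rightarrow> (nat \<Rightarrow> nat \<Rightarrow> real) \<Rightarrow> ereal" where
  "esw_ratio n m k v =
     (if OPT_ESW n m v = 0 then 1 else ereal (OPT_ESW n m v) / ereal (card_ESW n m k v))"

end

theory Submission
  imports Defs
begin

(* Upper bound: if OPT-ESW > 0, every bundle of an optimal allocation is nonempty and hence
   has at most m - n + 1 goods.  Let each agent keep the k goods of her bundle she values most
   (the whole bundle if it is smaller); their mean value is at least the mean value of the bundle,
   so she keeps at least a fraction min 1 (k / (m - n + 1)) of its value.  Since m \<le> k n, the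
   remaining goods can be handed out without giving anyone more than k goods.
   Lower bound: agent 0 values each of the goods 0, ..., m - n at 1 / (m - n + 1), and agent
   i > 0 only values good m - n + i.  Without the constraint every agent gets value 1, but a
   cardinal allocation gives agent 0 at most k / (m - n + 1). *)

lemma exists_subset_card_mean_ge:
  fixes w :: "'a \<Rightarrow> real"
  assumes "finite B" and "s \<le> card B"
  shows "\<exists>S\<subseteq>B. card S = s \<and> real s * sum w B \<le> real (card B) * sum w S"
  using assms
proof (induction "card B - s" arbitrary: B)
  case 0
  then show ?case by (intro exI[of _ B]) (simp add: mult.commute)
next
  case (Suc d)
  show ?case
  proof (cases "s = 0")
    case True
    then show ?thesis by (intro exI[of _ "{}"]) simp
  next
    case False
    define b where "b = card B"
    have "B \<noteq> {}" using Suc.hyps(2) by auto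
    then obtain x where x: "x \<in> B" and x_min: "\<And>y. y \<in> B \<Longrightarrow> w x \<le> w y"
      using ex_is_arg_min_if_finite[OF Suc.prems(1), of w] by (auto simp: is_arg_min_linorder)
    \<comment> \<open>discarding a cheapest good does not lower the mean value\<close>
    define B' where "B' = B - {x}"
    have B': "finite B'" "card B' = b - 1" "s \<le> card B'"
      using Suc x unfolding B'_def b_def by auto
    then obtain S where S: "S \<subseteq> B'" "card S = s" "real s * sum w B' \<le> real (b - 1) * sum w S"
      using Suc.hyps(1)[of B'] Suc.hyps(2) unfolding b_def by fastforce
    have b: "real b = real (b - 1) + 1" using B' False by linarith
    have sum_B: "sum w B = w x + sum w B'"
      using Suc.prems(1) x unfolding B'_def by (simp add: sum.remove)
    have x_le: "real (b - 1) * w x \<le> sum w B'"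
      using sum_bounded_below[of B' "w x" w] x_min B' unfolding B'_def by auto
    have "real (b - 1) * (real s * sum w B)
        = real s * (real (b - 1) * w x) + real (b - 1) * (real s * sum w B')"
      unfolding sum_B by (simp add: algebra_simps)
    also have "\<dots> \<le> real s * sum w B' + real (b - 1) * (real s * sum w B')"
      using x_le by (simp add: mult_left_mono)
    also have "\<dots> = real b * (real s * sum w B')"
      unfolding b by (simp add: algebra_simps)
    also have "\<dots> \<le> real (b - 1) * (real b * sum w S)"
      using mult_left_mono[OF S(3), of "real b"] by (simp add: ac_simps)
    finally have "real s * sum w B \<le> real b * sum w S"
      using B' False by (simp add: mult_le_cancel_left_pos)
    then show ?thesis using S(1,2) unfolding B'_def b_def by blast
  qed
qed

lemma exists_subset_card_le_sum_ge:
  fixes w :: "'a \<Rightarrow> real"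
  assumes "finite B" and "card B \<le> p" and "0 < k" and "\<And>x. x \<in> B \<Longrightarrow> 0 \<le> w x"
  shows "\<exists>S\<subseteq>B. card S \<le> k \<and> sum w B \<le> max (real p / real k) 1 * sum w S"
proof (cases "card B \<le> k")
  case True
  have "0 \<le> sum w B" using assms(4) by (simp add: sum_nonneg)
  then show ?thesis using True by (intro exI[of _ B]) (simp add: mult_le_cancel_right1)
next
  case False
  then obtain S where S: "S \<subseteq> B" "card S = k" "real k * sum w B \<le> real (card B) * sum w S"
    using exists_subset_card_mean_ge[OF assms(1), of k w] by auto
  have "0 \<le> sum w S" using S(1) assms(4) by (auto intro: sum_nonneg)
  then have "real (card B) * sum w S \<le> real p * sum w S"
    using assms(2) by (intro mult_right_mono) auto
  then have "real k * sum w B \<le> real p * sum w S"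
    using S(3) by linarith
  then have "sum w B \<le> real p / real k * sum w S"
    using assms(3) by (simp add: field_simps)
  also have "\<dots> \<le> max (real p / real k) 1 * sum w S"
    using \<open>0 \<le> sum w S\<close> by (intro mult_right_mono) auto
  finally show ?thesis using S(1,2) by auto
qed

lemma finite_allocations: "finite (allocations n m)"
  unfolding allocations_def by (intro finite_PiE) auto

lemma allocations_nonempty: "0 < n \<Longrightarrow> allocations n m \<noteq> {}"
  unfolding allocations_def by (auto simp: PiE_eq_empty_iff)

lemma finite_cardinal_allocations: "finite (cardinal_allocations n m k)"
  using finite_allocations unfolding cardinal_allocations_def by auto

lemma finite_good_bundle: "finite (good_bundle m f i)"
  unfolding good_bundle_def by auto

lemma good_bundle_subset: "good_bundle m f i \<subseteq> {..<m}"
  unfolding good_bundle_def by auto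

lemma good_bundles_disjoint: "i \<noteq> j \<Longrightarrow> good_bundle m f i \<inter> good_bundle m f j = {}"
  unfolding good_bundle_def by auto

lemma UN_good_bundle: "f \<in> allocations n m \<Longrightarrow> (\<Union>i<n. good_bundle m f i) = {..<m}"
  unfolding allocations_def good_bundle_def by (auto simp: PiE_iff)

lemma sum_card_good_bundle:
  assumes "f \<in> allocations n m"
  shows "(\<Sum>i<n. card (good_bundle m f i)) = m"
proof -
  have "(\<Sum>i<n. card (good_bundle m f i)) = card (\<Union>i<n. good_bundle m f i)"
    by (rule card_UN_disjoint[symmetric]) (auto simp: finite_good_bundle good_bundle_def)
  then show ?thesis using UN_good_bundle[OF assms] by simp
qed

lemma card_good_bundle_le:
  assumes "f \<in> allocations n m" and "\<And>j. j < n \<Longrightarrow> good_bundle m f j \<noteq> {}" and "i < n"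
  shows "card (good_bundle m f i) \<le> m - n + 1"
proof -
  have "n - 1 = (\<Sum>j\<in>{..<n} - {i}. 1)" using assms(3) by simp
  also have "\<dots> \<le> (\<Sum>j\<in>{..<n} - {i}. card (good_bundle m f j))"
    using assms(2) finite_good_bundle by (intro sum_mono) (auto simp: Suc_le_eq card_gt_0_iff)
  finally have "n - 1 + card (good_bundle m f i) \<le> m"
    using sum_card_good_bundle[OF assms(1)] assms(3) by (simp add: sum.remove)
  then show ?thesis by linarith
qed

lemma allocation_of_partition:
  assumes "\<And>i. i < n \<Longrightarrow> T i \<subseteq> {..<m}"
    and "\<And>i j. i < n \<Longrightarrow> j < n \<Longrightarrow> i \<noteq> j \<Longrightarrow> T i \<inter> T j = {}"
    and "(\<Union>i<n. T i) = {..<m}"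
  obtains f where "f \<in> allocations n m" and "\<And>i. i < n \<Longrightarrow> good_bundle m f i = T i"
proof
  define f where "f = (\<lambda>x\<in>{..<m}. SOME i. i < n \<and> x \<in> T i)"
  have f: "f x < n \<and> x \<in> T (f x)" if "x < m" for x
    using someI_ex[of "\<lambda>i. i < n \<and> x \<in> T i"] assms(3) that unfolding f_def by auto
  then show "f \<in> allocations n m" unfolding allocations_def f_def by auto
  show "good_bundle m f i = T i" if i: "i < n" for i
  proof
    show "good_bundle m f i \<subseteq> T i"
      using f unfolding good_bundle_def by auto
    show "T i \<subseteq> good_bundle m f i"
    proof
      fix x assume x: "x \<in> T i"
      then have "x < m" using assms(1) i by auto
      then have "f x = i" using f assms(2) i x by blast
      then show "x \<in> good_bundle m f i" using \<open>x < m\<close> unfolding good_bundle_def by simp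
    qed
  qed
qed

lemma ex_less_if_sum_less:
  fixes c :: "nat \<Rightarrow> nat"
  assumes "(\<Sum>i<n. c i) < k * n"
  obtains i where "i < n" and "c i < k"
proof (rule ccontr)
  assume "\<not> thesis"
  then have "k \<le> c i" if "i < n" for i
    using that not_less \<open>\<And>i. i < n \<Longrightarrow> c i < k \<Longrightarrow> thesis\<close> by blast
  then have "(\<Sum>i<n. k) \<le> (\<Sum>i<n. c i)"
    by (intro sum_mono) simp
  then show False using assms by (simp add: mult.commute)
qed

lemma exists_cardinal_allocation_extending:
  assumes "m \<le> k * n"
    and "\<And>i. i < n \<Longrightarrow> T i \<subseteq> {..<m}" and "\<And>i. i < n \<Longrightarrow> card (T i) \<le> k"
    and "\<And>i j. i < n \<Longrightarrow> j < n \<Longrightarrow> i \<noteq> j \<Longrightarrow> T i \<inter> T j = {}"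
  shows "\<exists>g\<in>cardinal_allocations n m k. \<forall>i<n. T i \<subseteq> good_bundle m g i"
  using assms(2-)
proof (induction "m - card (\<Union>i<n. T i)" arbitrary: T)
  case 0
  have "(\<Union>i<n. T i) \<subseteq> {..<m}"
    using "0.prems"(1) by auto
  moreover from this have "card (\<Union>i<n. T i) \<le> m"
    using card_mono[of "{..<m}"] by fastforce
  ultimately have "(\<Union>i<n. T i) = {..<m}"
    using "0.hyps" by (intro card_subset_eq) auto
  then obtain g where "g \<in> allocations n m" "\<And>i. i < n \<Longrightarrow> good_bundle m g i = T i"
    using allocation_of_partition[of n T m] "0.prems"(1,3) by blast
  then show ?case using "0.prems"(2) by (auto simp: cardinal_allocations_def)
next
  case (Suc d)
  have fin: "finite (T i)" if "i < n" for i using Suc.prems(1)[OF that] finite_subset by blast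
  have card_UN: "card (\<Union>i<n. T i) = (\<Sum>i<n. card (T i))"
    using fin Suc.prems(3) by (intro card_UN_disjoint) auto
  have "(\<Union>i<n. T i) \<noteq> {..<m}"
  proof
    assume "(\<Union>i<n. T i) = {..<m}"
    then show False using Suc.hyps(2) by simp
  qed
  then obtain x where x: "x < m" "x \<notin> (\<Union>i<n. T i)"
    using Suc.prems(1) by blast
  have "(\<Sum>i<n. card (T i)) < k * n"
    using card_UN Suc.hyps(2) assms(1) by linarith
  then obtain i where i: "i < n" "card (T i) < k"
    by (rule ex_less_if_sum_less)
  define T' where "T' = T(i := insert x (T i))"
  have "(\<Union>j<n. T' j) = insert x (\<Union>j<n. T j)"
    unfolding T'_def using i(1) by (auto split: if_splits)
  then have "d = m - card (\<Union>j<n. T' j)"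
    using Suc.hyps(2) x(2) fin by simp
  moreover have "T' j \<subseteq> {..<m}" "card (T' j) \<le> k" if "j < n" for j
    using Suc.prems(1,2) that i x fin unfolding T'_def by (auto simp: card_insert_if)
  moreover have "T' j \<inter> T' l = {}" if "j < n" "l < n" "j \<noteq> l" for j l
    using Suc.prems(3) that x(2) i(1) unfolding T'_def by auto
  ultimately have "\<exists>g\<in>cardinal_allocations n m k. \<forall>j<n. T' j \<subseteq> good_bundle m g j"
    by (rule Suc.hyps(1))
  moreover have "T j \<subseteq> T' j" for j
    unfolding T'_def by auto
  ultimately show ?case by blast
qed

lemma cardinal_allocations_nonempty: "m \<le> k * n \<Longrightarrow> cardinal_allocations n m k \<noteq> {}"
  using exists_cardinal_allocation_extending[of m k n "\<lambda>_. {}"] by auto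

lemma ESW_le: "i < n \<Longrightarrow> ESW n m v f \<le> (\<Sum>g\<in>good_bundle m f i. v i g)"
  unfolding ESW_def by (intro Min_le) auto

lemma ESW_attained:
  assumes "0 < n"
  shows "\<exists>i<n. ESW n m v f = (\<Sum>g\<in>good_bundle m f i. v i g)"
proof -
  have "ESW n m v f \<in> (\<lambda>i. \<Sum>g\<in>good_bundle m f i. v i g) ` {..<n}"
    unfolding ESW_def using assms by (intro Min_in) auto
  then show ?thesis by auto
qed

lemma ESW_nonneg:
  assumes "0 < n" and "valid_instance n m v"
  shows "0 \<le> ESW n m v f"
proof -
  obtain i where "i < n" "ESW n m v f = (\<Sum>g\<in>good_bundle m f i. v i g)"
    using ESW_attained[OF assms(1)] by blast
  then show ?thesis
    using assms(2) by (auto simp: valid_instance_def good_bundle_def intro!: sum_nonneg)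
qed

lemma ESW_le_OPT_ESW: "f \<in> allocations n m \<Longrightarrow> ESW n m v f \<le> OPT_ESW n m v"
  unfolding OPT_ESW_def using finite_allocations by (intro Max_ge) auto

lemma OPT_ESW_attained:
  assumes "0 < n"
  shows "\<exists>f\<in>allocations n m. OPT_ESW n m v = ESW n m v f"
proof -
  have "OPT_ESW n m v \<in> ESW n m v ` allocations n m"
    unfolding OPT_ESW_def using finite_allocations allocations_nonempty[OF assms] by (intro Max_in) auto
  then show ?thesis by auto
qed

lemma ESW_le_card_ESW: "f \<in> cardinal_allocations n m k \<Longrightarrow> ESW n m v f \<le> card_ESW n m k v"
  unfolding card_ESW_def using finite_cardinal_allocations by (intro Max_ge) auto

lemma card_ESW_attained:
  assumes "m \<le> k * n"
  shows "\<exists>f\<in>cardinal_allocations n m k. card_ESW n m k v = ESW n m v f"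
proof -
  have "card_ESW n m k v \<in> ESW n m v ` cardinal_allocations n m k"
    unfolding card_ESW_def using finite_cardinal_allocations cardinal_allocations_nonempty[OF assms]
    by (intro Max_in) auto
  then show ?thesis by auto
qed

lemma card_ESW_le_OPT_ESW:
  assumes "m \<le> k * n"
  shows "card_ESW n m k v \<le> OPT_ESW n m v"
proof -
  obtain f where "f \<in> cardinal_allocations n m k" "card_ESW n m k v = ESW n m v f"
    using card_ESW_attained[OF assms] by blast
  then show ?thesis using ESW_le_OPT_ESW[of f n m v] by (simp add: cardinal_allocations_def)
qed

lemma exists_cardinal_allocation_keeping_share:
  assumes "0 < k" and "m \<le> k * n" and "valid_instance n m v"
    and "\<And>i. i < n \<Longrightarrow> card (good_bundle m f i) \<le> p"
  shows "\<exists>g\<in>cardinal_allocations n m k. \<forall>i<n.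
           (\<Sum>x\<in>good_bundle m f i. v i x) \<le> max (real p / real k) 1 * (\<Sum>x\<in>good_bundle m g i. v i x)"
    (is "\<exists>g\<in>_. \<forall>i<n. _ \<le> ?R * _")
proof -
  have "\<exists>S\<subseteq>good_bundle m f i. card S \<le> k \<and> sum (v i) (good_bundle m f i) \<le> ?R * sum (v i) S"
    if "i < n" for i
    using assms(1,3) assms(4)[OF that] that
    by (intro exists_subset_card_le_sum_ge)
      (auto simp: finite_good_bundle valid_instance_def good_bundle_def)
  then obtain S where S: "\<And>i. i < n \<Longrightarrow> S i \<subseteq> good_bundle m f i \<and> card (S i) \<le> k \<and>
      sum (v i) (good_bundle m f i) \<le> ?R * sum (v i) (S i)"
    by metis
  have "S i \<subseteq> {..<m}" if "i < n" for i
    using S[OF that] good_bundle_subset by blast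
  moreover have "card (S i) \<le> k" if "i < n" for i
    using S[OF that] by blast
  moreover have "S i \<inter> S j = {}" if "i < n" "j < n" "i \<noteq> j" for i j
    using S[OF that(1)] S[OF that(2)] good_bundles_disjoint[OF that(3)] by blast
  ultimately obtain g where g: "g \<in> cardinal_allocations n m k"
    "\<And>i. i < n \<Longrightarrow> S i \<subseteq> good_bundle m g i"
    using exists_cardinal_allocation_extending[OF assms(2), of S] by blast
  have "sum (v i) (good_bundle m f i) \<le> ?R * sum (v i) (good_bundle m g i)" if "i < n" for i
  proof -
    have "sum (v i) (S i) \<le> sum (v i) (good_bundle m g i)"
      using g(2)[OF that] that assms(3)
      by (auto simp: valid_instance_def good_bundle_def intro!: sum_mono2)
    then have "?R * sum (v i) (S i) \<le> ?R * sum (v i) (good_bundle m g i)"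
      by (intro mult_left_mono) auto
    then show ?thesis using S[OF that] by linarith
  qed
  then show ?thesis using g(1) by blast
qed

lemma OPT_ESW_le_card_ESW:
  assumes "0 < n" and "0 < k" and "n \<le> m" and "m \<le> k * n" and "valid_instance n m v"
  shows "OPT_ESW n m v \<le> max (real (m - n + 1) / real k) 1 * card_ESW n m k v"
    (is "_ \<le> ?R * _")
proof (cases "OPT_ESW n m v \<le> 0")
  case True
  obtain g where "card_ESW n m k v = ESW n m v g"
    using card_ESW_attained[OF assms(4)] by blast
  then have "0 \<le> card_ESW n m k v"
    using ESW_nonneg[OF assms(1,5)] by simp
  then have "0 \<le> ?R * card_ESW n m k v" by simp
  then show ?thesis using True by linarith
next
  case False
  obtain f where f: "f \<in> allocations n m" "OPT_ESW n m v = ESW n m v f"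
    using OPT_ESW_attained[OF assms(1)] by blast
  have OPT_le: "OPT_ESW n m v \<le> sum (v i) (good_bundle m f i)" if "i < n" for i
    using ESW_le[OF that] f(2) by simp
  then have "good_bundle m f i \<noteq> {}" if "i < n" for i
    using False that by fastforce
  then have "card (good_bundle m f i) \<le> m - n + 1" if "i < n" for i
    using card_good_bundle_le[OF f(1)] that by blast
  then obtain g where g: "g \<in> cardinal_allocations n m k"
    "\<forall>i<n. sum (v i) (good_bundle m f i) \<le> ?R * sum (v i) (good_bundle m g i)"
    using exists_cardinal_allocation_keeping_share[OF assms(2,4,5)] by blast
  obtain i where i: "i < n" "ESW n m v g = sum (v i) (good_bundle m g i)"
    using ESW_attained[OF assms(1)] by blast
  have "OPT_ESW n m v \<le> sum (v i) (good_bundle m f i)"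
    using OPT_le[OF i(1)] .
  also have "\<dots> \<le> ?R * ESW n m v g"
    using g(2) i by simp
  also have "\<dots> \<le> ?R * card_ESW n m k v"
    using ESW_le_card_ESW[OF g(1)] by (intro mult_left_mono) auto
  finally show ?thesis .
qed

lemma card_ESW_pos:
  assumes "0 < n" and "0 < k" and "n \<le> m" and "m \<le> k * n" and "valid_instance n m v"
    and "OPT_ESW n m v \<noteq> 0"
  shows "0 < card_ESW n m k v"
proof -
  obtain f where "OPT_ESW n m v = ESW n m v f"
    using OPT_ESW_attained[OF assms(1)] by blast
  then have "0 < OPT_ESW n m v"
    using ESW_nonneg[OF assms(1,5), of f] assms(6) by linarith
  then have "0 < max (real (m - n + 1) / real k) 1 * card_ESW n m k v"
    using OPT_ESW_le_card_ESW[OF assms(1-5)] by linarith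
  then show ?thesis by (simp add: zero_less_mult_iff)
qed

lemma esw_ratio_le:
  assumes "0 < n" and "0 < k" and "n \<le> m" and "m \<le> k * n" and "valid_instance n m v"
  shows "esw_ratio n m k v \<le> ereal (max (real (m - n + 1) / real k) 1)"
proof (cases "OPT_ESW n m v = 0")
  case True
  then show ?thesis unfolding esw_ratio_def by (simp add: le_max_iff_disj)
next
  case False
  have "0 < card_ESW n m k v" using card_ESW_pos[OF assms False] .
  then have "OPT_ESW n m v / card_ESW n m k v \<le> max (real (m - n + 1) / real k) 1"
    using OPT_ESW_le_card_ESW[OF assms] by (simp add: pos_divide_le_eq)
  moreover have "esw_ratio n m k v = ereal (OPT_ESW n m v / card_ESW n m k v)"
    unfolding esw_ratio_def using False \<open>0 < card_ESW n m k v\<close> by simp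
  ultimately show ?thesis by (simp only: ereal_less_eq(3))
qed

definition hard_instance :: "nat \<Rightarrow> nat \<Rightarrow> nat \<Rightarrow> nat \<Rightarrow> real" where
  "hard_instance n m i g =
     (if i = 0 then (if g \<le> m - n then 1 / real (m - n + 1) else 0)
      else if g = m - n + i then 1 else 0)"

lemma valid_hard_instance:
  assumes "n \<le> m"
  shows "valid_instance n m (hard_instance n m)"
  unfolding valid_instance_def
proof (intro conjI allI impI)
  fix i g assume "i < n" "g < m"
  then show "0 \<le> hard_instance n m i g" by (simp add: hard_instance_def)
next
  fix i assume i: "i < n"
  show "(\<Sum>g<m. hard_instance n m i g) = 1"
  proof (cases "i = 0")
    case True
    have "{..<m} \<inter> {g. g \<le> m - n} = {..m - n}" using i assms by auto
    then show ?thesis using True by (simp add: hard_instance_def sum.If_cases)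
  next
    case False
    then show ?thesis using i assms by (simp add: hard_instance_def)
  qed
qed

lemma OPT_ESW_hard_instance:
  assumes "0 < n" and "n \<le> m"
  shows "1 \<le> OPT_ESW n m (hard_instance n m)"
proof -
  \<comment> \<open>goods up to m - n go to agent 0, good m - n + i to agent i\<close>
  define f where "f = (\<lambda>g\<in>{..<m}. g - (m - n))"
  have f: "f \<in> allocations n m"
    unfolding allocations_def f_def using assms by auto
  obtain i where i: "i < n" "ESW n m (hard_instance n m) f = sum (hard_instance n m i) (good_bundle m f i)"
    using ESW_attained[OF assms(1)] by blast
  have "1 \<le> sum (hard_instance n m i) (good_bundle m f i)"
  proof (cases "i = 0")
    case True
    have "good_bundle m f i = {..m - n}"
      unfolding good_bundle_def f_def True using assms by auto
    then show ?thesis using True by (simp add: hard_instance_def)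
  next
    case False
    have "good_bundle m f i = {m - n + i}"
      unfolding good_bundle_def f_def using False i assms by auto
    then show ?thesis using False by (simp add: hard_instance_def)
  qed
  also have "\<dots> = ESW n m (hard_instance n m) f"
    using i(2) by simp
  also have "\<dots> \<le> OPT_ESW n m (hard_instance n m)"
    by (rule ESW_le_OPT_ESW[OF f])
  finally show ?thesis .
qed

lemma card_ESW_hard_instance:
  assumes "0 < n" and "m \<le> k * n"
  shows "card_ESW n m k (hard_instance n m) \<le> real k / real (m - n + 1)"
proof -
  obtain f where f: "f \<in> cardinal_allocations n m k"
    "card_ESW n m k (hard_instance n m) = ESW n m (hard_instance n m) f"
    using card_ESW_attained[OF assms(2)] by blast
  have "ESW n m (hard_instance n m) f \<le> sum (hard_instance n m 0) (good_bundle m f 0)"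
    using ESW_le[OF assms(1)] .
  also have "\<dots> \<le> real (card (good_bundle m f 0)) * (1 / real (m - n + 1))"
    by (intro sum_bounded_above) (simp add: hard_instance_def)
  also have "\<dots> \<le> real k * (1 / real (m - n + 1))"
    using f(1) assms(1) unfolding cardinal_allocations_def by (intro mult_right_mono) auto
  finally show ?thesis using f(2) by simp
qed

lemma esw_ratio_hard_instance_ge:
  assumes "0 < n" and "0 < k" and "n \<le> m" and "m \<le> k * n"
  shows "ereal (max (real (m - n + 1) / real k) 1) \<le> esw_ratio n m k (hard_instance n m)"
proof -
  let ?v = "hard_instance n m"
  have opt: "1 \<le> OPT_ESW n m ?v"
    using OPT_ESW_hard_instance[OF assms(1,3)] .
  have c_pos: "0 < card_ESW n m k ?v"
    using card_ESW_pos[OF assms valid_hard_instance[OF assms(3)]] opt by simp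
  have "1 \<le> OPT_ESW n m ?v / card_ESW n m k ?v"
    using card_ESW_le_OPT_ESW[OF assms(4)] c_pos by simp
  moreover have "real (m - n + 1) / real k \<le> OPT_ESW n m ?v / card_ESW n m k ?v"
  proof -
    have "card_ESW n m k ?v * real (m - n + 1) \<le> real k"
      using card_ESW_hard_instance[OF assms(1,4)] by (simp add: le_divide_eq)
    then have "real (m - n + 1) / real k \<le> 1 / card_ESW n m k ?v"
      using c_pos assms(2) by (simp add: divide_le_eq le_divide_eq mult.commute)
    also have "\<dots> \<le> OPT_ESW n m ?v / card_ESW n m k ?v"
      using opt c_pos by (intro divide_right_mono) auto
    finally show ?thesis .
  qed
  ultimately show ?thesis
    unfolding esw_ratio_def using opt c_pos by simp
qed

theorem theorem2:
  fixes n m k :: nat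
  assumes "0 < n" and "0 < m" and "0 < k" and "n \<le> m" and "k < m" and "m \<le> k * n"
  shows "(SUP v\<in>{v. valid_instance n m v}. esw_ratio n m k v)
           = ereal (max ((real m - real n + 1) / real k) 1)"
proof -
  have R: "real m - real n + 1 = real (m - n + 1)"
    using assms(4) by simp
  show ?thesis unfolding R
  proof (rule antisym)
    show "(SUP v\<in>{v. valid_instance n m v}. esw_ratio n m k v)
        \<le> ereal (max (real (m - n + 1) / real k) 1)"
      using esw_ratio_le[OF assms(1,3,4,6)] by (intro SUP_least) simp
    show "ereal (max (real (m - n + 1) / real k) 1)
        \<le> (SUP v\<in>{v. valid_instance n m v}. esw_ratio n m k v)"
      using esw_ratio_hard_instance_ge[OF assms(1,3,4,6)] valid_hard_instance[OF assms(4)]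
      by (intro SUP_upper2[of "hard_instance n m"]) simp_all
  qed
qed

end
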